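(* Let $A\in \mathbb{R}^{m\times n}$ with $A^{\dagger}\geq 0$. Let $A=P_{1}-R_{1}+S_{1}$ and $A=P_{2}-R_{2}+S_{2}$ be two weak regular proper double splittings of $A$. Define $$W_{1}=\begin{pmatrix} P_{1}^{\dagger}R_{1} & -P_{1}^{\dagger}S_{1}\\ I & 0\end{pmatrix},\qquad W_{2}=\begin{pmatrix} P_{2}^{\dagger}R_{2} & -P_{2}^{\dagger}S_{2}\\ I & 0\end{pmatrix}\in\mathbb{R}^{2n\times 2n},$$ where $I$ is the $n\times n$ identity matrix. If $P_{1}^{\dagger}A\geq P_{2}^{\dagger}A$ and at least one of the conditions (i) $P_{1}^{\dagger}R_{1}\geq P_{2}^{\dagger}R_{2}$, (ii) $P_{1}^{\dagger}S_{1}\geq P_{2}^{\dagger}S_{2}$ holds, then $\rho(W_{1})\leq \rho(W_{2})< 1$.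
   Context: $A^{\dagger}$ denotes the Moore–Penrose inverse of $A$. For real matrices, $B\geq 0$ means all entries of $B$ are nonnegative, and $B\geq C$ means $B-C\geq 0$. $\rho(\cdot)$ denotes the spectral radius. For $A\in\mathbb{R}^{m\times n}$, a decomposition $A=P-R+S$ with $P,R,S\in\mathbb{R}^{m\times n}$ is a proper double splitting if $\mathcal{R}(A)=\mathcal{R}(P)$ and $\mathcal{N}(A)=\mathcal{N}(P)$. A proper double splitting is called weak regular if $P^{\dagger}\geq 0$, $P^{\dagger}R\geq 0$ and $-P^{\dagger}S\geq 0$. *)

theory Defs
  imports "Jordan_Normal_Form.Spectral_Radius"
begin

definition is_mp_inverse :: "real mat \<Rightarrow> real mat \<Rightarrow> bool" where
  "is_mp_inverse A X \<longleftrightarrow> X \<in> carrier_mat (dim_col A) (dim_row A) \<and>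
     A * X * A = A \<and> X * A * X = X \<and>
     transpose_mat (A * X) = A * X \<and> transpose_mat (X * A) = X * A"

definition mp_inv :: "real mat \<Rightarrow> real mat" where
  "mp_inv A = (THE X. is_mp_inverse A X)"

definition nonneg_mat :: "real mat \<Rightarrow> bool" where
  "nonneg_mat B \<longleftrightarrow> (\<forall>i < dim_row B. \<forall>j < dim_col B. B $$ (i, j) \<ge> 0)"

definition ge_mat :: "real mat \<Rightarrow> real mat \<Rightarrow> bool" where
  "ge_mat B C \<longleftrightarrow> dim_row B = dim_row C \<and> dim_col B = dim_col C \<and> nonneg_mat (B - C)"

definition range_mat :: "real mat \<Rightarrow> real vec set" where
  "range_mat A = {A *\<^sub>v x | x. x \<in> carrier_vec (dim_col A)}"

definition null_mat :: "real mat \<Rightarrow> real vec set" where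
  "null_mat A = {x \<in> carrier_vec (dim_col A). A *\<^sub>v x = 0\<^sub>v (dim_row A)}"

definition proper_double_splitting ::
  "real mat \<Rightarrow> real mat \<Rightarrow> real mat \<Rightarrow> real mat \<Rightarrow> bool" where
  "proper_double_splitting A P R S \<longleftrightarrow>
     P \<in> carrier_mat (dim_row A) (dim_col A) \<and> R \<in> carrier_mat (dim_row A) (dim_col A) \<and>
     S \<in> carrier_mat (dim_row A) (dim_col A) \<and> A = P - R + S \<and>
     range_mat A = range_mat P \<and> null_mat A = null_mat P"

definition weak_regular_pds ::
  "real mat \<Rightarrow> real mat \<Rightarrow> real mat \<Rightarrow> real mat \<Rightarrow> bool" where
  "weak_regular_pds A P R S \<longleftrightarrow> proper_double_splitting A P R S \<and>
     nonneg_mat (mp_inv P) \<and> nonneg_mat (mp_inv P * R) \<and> nonneg_mat (- (mp_inv P * S))"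

definition iter_mat :: "nat \<Rightarrow> real mat \<Rightarrow> real mat \<Rightarrow> real mat \<Rightarrow> real mat" where
  "iter_mat n P R S = four_block_mat (mp_inv P * R) (- (mp_inv P * S)) (1\<^sub>m n) (0\<^sub>m n n)"

definition real_spectral_radius :: "real mat \<Rightarrow> real" where
  "real_spectral_radius W = spectral_radius (map_mat complex_of_real W)"

end

theory Submission
  imports Defs
begin

(*
  Write T = P\<^sup>+ R and U = -P\<^sup>+ S, both nonnegative, so that W = [[T, U], [I, 0]].
  Eigenvectors of W and of its transpose reduce to the quadratic problem
  \<mu>\<^sup>2 v = \<mu> T v + U v, and taking moduli yields u \<ge> 0, u \<noteq> 0 with
  |\<mu>|\<^sup>2 u \<le> |\<mu>| T u + U u.

  Convergence: if |\<mu>| \<ge> 1 for a left eigenvector, then x \<le> (T + U)\<^sup>T x.  Since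
  P\<^sup>+ A = A\<^sup>+ A - (T + U) and P P\<^sup>+ = A A\<^sup>+ (equal range and null space), the vector
  y = (P\<^sup>+)\<^sup>T x \<ge> 0 satisfies y = (A\<^sup>+)\<^sup>T A\<^sup>T y \<le> (A\<^sup>+)\<^sup>T ((A\<^sup>+ A)\<^sup>T x - x) = 0,
  so (T + U)\<^sup>T x = (R - S)\<^sup>T y = 0 and x = 0.

  Comparison: P1\<^sup>+ A \<ge> P2\<^sup>+ A says T1 + U1 \<le> T2 + U2; with (i) or (ii) this gives
  \<rho> T1 + U1 \<le> \<rho> T2 + U2 for \<rho> = \<rho>(W1) \<le> 1.  For a right eigenvector of W1,
  z = (\<rho> u, u) then satisfies W2 z \<ge> \<rho> z, and the Collatz--Wielandt bound gives
  \<rho>(W2) \<ge> \<rho>.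

  The Moore--Penrose inverse, specified by the Penrose equations, exists because every
  matrix has a full rank factorization A = B C, and then C\<^sup>T (C C\<^sup>T)\<^sup>-\<^sup>1 (B\<^sup>T B)\<^sup>-\<^sup>1 B\<^sup>T
  satisfies those equations.
*)

lemma index_mult_mat_sum:
  assumes "A \<in> carrier_mat m k" "B \<in> carrier_mat k n" "i < m" "j < n"
  shows "(A * B) $$ (i, j) = (\<Sum>l<k. A $$ (i, l) * B $$ (l, j))"
  using assms by (simp add: scalar_prod_def atLeast0LessThan)

lemma index_mult_mat_vec_sum:
  assumes "A \<in> carrier_mat m k" "x \<in> carrier_vec k" "i < m"
  shows "(A *\<^sub>v x) $ i = (\<Sum>l<k. A $$ (i, l) * x $ l)"
  using assms by (simp add: scalar_prod_def atLeast0LessThan)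

lemma eq_matI_mult_vec:
  fixes M N :: "'a :: comm_ring_1 mat"
  assumes "M \<in> carrier_mat m n" "N \<in> carrier_mat m n"
    and "\<And>x. x \<in> carrier_vec n \<Longrightarrow> M *\<^sub>v x = N *\<^sub>v x"
  shows "M = N"
proof (rule eq_matI)
  fix i j assume "i < dim_row N" "j < dim_col N"
  hence "i < m" "j < n" using assms by auto
  hence "M $$ (i, j) = (M *\<^sub>v unit_vec n j) $ i" "N $$ (i, j) = (N *\<^sub>v unit_vec n j) $ i"
    using assms(1,2) by auto
  thus "M $$ (i, j) = N $$ (i, j)" using assms(3)[of "unit_vec n j"] by simp
qed (use assms in auto)

lemma zero_mult_mat_vec:
  "v \<in> carrier_vec n \<Longrightarrow> 0\<^sub>m m n *\<^sub>v v = (0\<^sub>v m :: 'a :: semiring_0 vec)"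
  by (intro eq_vecI) (auto simp: scalar_prod_def)

lemma eq_of_minus_eq_zero_vec:
  fixes a b :: "'a :: ab_group_add vec"
  assumes "a \<in> carrier_vec n" "b \<in> carrier_vec n" "a - b = 0\<^sub>v n"
  shows "a = b"
proof (rule eq_vecI)
  fix i assume "i < dim_vec b"
  thus "a $ i = b $ i" using arg_cong[OF assms(3), of "\<lambda>v. v $ i"] assms(1,2) by simp
qed (use assms in auto)

lemma transpose_mult_mat_vec:
  fixes A B :: "'a :: comm_semiring_0 mat"
  assumes "A \<in> carrier_mat m k" "B \<in> carrier_mat k n" "x \<in> carrier_vec m"
  shows "transpose_mat (A * B) *\<^sub>v x = transpose_mat B *\<^sub>v (transpose_mat A *\<^sub>v x)"
  using assms by (simp add: transpose_mult[OF assms(1,2)] assoc_mult_mat_vec[of _ n k _ m])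

lemma smult_mat_mult_vec:
  fixes A :: "'a :: comm_ring_1 mat"
  assumes "A \<in> carrier_mat m n" "v \<in> carrier_vec n"
  shows "(c \<cdot>\<^sub>m A) *\<^sub>v v = c \<cdot>\<^sub>v (A *\<^sub>v v)"
  by (rule eq_vecI) (use assms in \<open>auto simp: index_mult_mat_vec_sum sum_distrib_left mult.assoc\<close>)

lemma smult_add_mult_mat_vec:
  fixes T U :: "'a :: comm_ring_1 mat"
  assumes "T \<in> carrier_mat m n" "U \<in> carrier_mat m n" "u \<in> carrier_vec n"
  shows "(c \<cdot>\<^sub>m T + U) *\<^sub>v u = c \<cdot>\<^sub>v (T *\<^sub>v u) + U *\<^sub>v u"
  using add_mult_distrib_mat_vec[of "c \<cdot>\<^sub>m T" m n U u] smult_mat_mult_vec[of T m n u c] assms by simp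

lemma smult_append_vec:
  assumes "v \<in> carrier_vec n"
  shows "c \<cdot>\<^sub>v (v @\<^sub>v w) = (c \<cdot>\<^sub>v v) @\<^sub>v (c \<cdot>\<^sub>v w)"
  by (rule eq_vecI) (use assms in \<open>auto simp: less_Suc_eq\<close>)

section \<open>Full rank factorization\<close>

definition full_column_rank :: "real mat \<Rightarrow> bool" where
  "full_column_rank B \<longleftrightarrow>
     (\<forall>x \<in> carrier_vec (dim_col B). B *\<^sub>v x = 0\<^sub>v (dim_row B) \<longrightarrow> x = 0\<^sub>v (dim_col B))"

definition append_col :: "'a mat \<Rightarrow> 'a vec \<Rightarrow> 'a mat" where
  "append_col A v = mat (dim_row A) (Suc (dim_col A))
     (\<lambda>(i, j). if j < dim_col A then A $$ (i, j) else v $ i)"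

lemma append_col_carrier [simp]:
  "A \<in> carrier_mat m n \<Longrightarrow> append_col A v \<in> carrier_mat m (Suc n)"
  unfolding append_col_def by auto

lemma dim_append_col [simp]:
  "dim_row (append_col A v) = dim_row A" "dim_col (append_col A v) = Suc (dim_col A)"
  unfolding append_col_def by auto

lemma append_col_split:
  assumes "A \<in> carrier_mat m (Suc n)"
  shows "A = append_col (mat m n (\<lambda>ij. A $$ ij)) (col A n)"
  by (rule eq_matI, use assms in \<open>auto simp: append_col_def less_Suc_eq\<close>)

lemma mult_append_col:
  fixes B C :: "'a :: comm_ring_1 mat"
  assumes B: "B \<in> carrier_mat m r" and C: "C \<in> carrier_mat r n" and y: "y \<in> carrier_vec r"
  shows "B * append_col C y = append_col (B * C) (B *\<^sub>v y)"
proof (rule eq_matI)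
  fix i j assume "i < dim_row (append_col (B * C) (B *\<^sub>v y))"
    and "j < dim_col (append_col (B * C) (B *\<^sub>v y))"
  hence i: "i < m" and j: "j < Suc n" using B C by auto
  show "(B * append_col C y) $$ (i, j) = append_col (B * C) (B *\<^sub>v y) $$ (i, j)"
    using index_mult_mat_sum[OF B append_col_carrier[OF C] i j] index_mult_mat_sum[OF B C i]
      index_mult_mat_vec_sum[OF B y i] B C i j
    by (auto simp: append_col_def intro!: sum.cong)
qed (use B C in auto)

lemma append_col_mult_block_diag:
  fixes B C :: "'a :: comm_ring_1 mat"
  assumes B: "B \<in> carrier_mat m r" and C: "C \<in> carrier_mat r n" and a: "a \<in> carrier_vec m"
  shows "append_col B a * four_block_mat C (0\<^sub>m r 1) (0\<^sub>m 1 n) (1\<^sub>m 1) = append_col (B * C) a"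
proof (rule eq_matI)
  let ?D = "four_block_mat C (0\<^sub>m r 1) (0\<^sub>m 1 n) (1\<^sub>m 1)"
  have D: "?D \<in> carrier_mat (Suc r) (Suc n)" using C by auto
  fix i j assume "i < dim_row (append_col (B * C) a)" and "j < dim_col (append_col (B * C) a)"
  hence i: "i < m" and j: "j < Suc n" using B C by auto
  have "(append_col B a * ?D) $$ (i, j) = (\<Sum>l<r. B $$ (i, l) * ?D $$ (l, j)) + a $ i * ?D $$ (r, j)"
    using index_mult_mat_sum[OF append_col_carrier[OF B] D i j] B i
    by (simp add: append_col_def)
  also have "\<dots> = append_col (B * C) a $$ (i, j)"
    using index_mult_mat_sum[OF B C i, of j] B C i j by (auto simp: append_col_def less_Suc_eq)
  finally show "(append_col B a * ?D) $$ (i, j) = append_col (B * C) a $$ (i, j)" .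
qed (use B C in auto)

lemma append_col_mult_vec:
  fixes B :: "'a :: comm_ring_1 mat"
  assumes B: "B \<in> carrier_mat m r" and a: "a \<in> carrier_vec m" and x: "x \<in> carrier_vec (Suc r)"
  shows "append_col B a *\<^sub>v x = B *\<^sub>v vec_first x r + x $ r \<cdot>\<^sub>v a"
proof (rule eq_vecI)
  fix i assume "i < dim_vec (B *\<^sub>v vec_first x r + x $ r \<cdot>\<^sub>v a)"
  hence i: "i < m" using a by auto
  show "(append_col B a *\<^sub>v x) $ i = (B *\<^sub>v vec_first x r + x $ r \<cdot>\<^sub>v a) $ i"
    using index_mult_mat_vec_sum[OF append_col_carrier[OF B] x i]
      index_mult_mat_vec_sum[OF B vec_first_carrier i] B a i
    by (simp add: append_col_def vec_first_def mult.commute)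
qed (use B a in auto)

lemma full_column_rank_append_col:
  assumes B: "B \<in> carrier_mat m r" and a: "a \<in> carrier_vec m" and full: "full_column_rank B"
    and a_notin: "\<forall>y \<in> carrier_vec r. a \<noteq> B *\<^sub>v y"
  shows "full_column_rank (append_col B a)"
  unfolding full_column_rank_def
proof (intro ballI impI)
  fix x assume "x \<in> carrier_vec (dim_col (append_col B a))"
    and zero: "append_col B a *\<^sub>v x = 0\<^sub>v (dim_row (append_col B a))"
  hence x: "x \<in> carrier_vec (Suc r)" and eq: "B *\<^sub>v vec_first x r + x $ r \<cdot>\<^sub>v a = 0\<^sub>v m"
    using B append_col_mult_vec[OF B a] by auto
  have "(B *\<^sub>v vec_first x r) $ i = - (x $ r) * a $ i" if "i < m" for i
    using arg_cong[OF eq, of "\<lambda>v. v $ i"] that B a by simp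
  hence Bx: "B *\<^sub>v vec_first x r = - (x $ r) \<cdot>\<^sub>v a" using B a by (intro eq_vecI) auto
  have last: "x $ r = 0"
  proof (rule ccontr)
    assume "x $ r \<noteq> 0"
    hence "B *\<^sub>v ((- 1 / x $ r) \<cdot>\<^sub>v vec_first x r) = a"
      using B a by (simp add: mult_mat_vec Bx smult_smult_assoc)
    thus False using a_notin by (metis smult_carrier_vec vec_first_carrier)
  qed
  hence "B *\<^sub>v vec_first x r = 0\<^sub>v m" using Bx a by auto
  hence "vec_first x r = 0\<^sub>v r" using full B unfolding full_column_rank_def by auto
  hence "x $ i = 0" if "i < r" for i
    using that by (metis \<open>vec_first x r = 0\<^sub>v r\<close> index_vec index_zero_vec(1) vec_first_def)
  with last x show "x = 0\<^sub>v (dim_col (append_col B a))"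
    using B by (intro eq_vecI) (auto simp: less_Suc_eq)
qed

lemma full_row_rank_append_col:
  assumes C: "C \<in> carrier_mat r n" and full: "full_column_rank (transpose_mat C)"
  shows "full_column_rank (transpose_mat (append_col C y))"
  unfolding full_column_rank_def
proof (intro ballI impI)
  fix z assume "z \<in> carrier_vec (dim_col (transpose_mat (append_col C y)))"
    and zero: "transpose_mat (append_col C y) *\<^sub>v z = 0\<^sub>v (dim_row (transpose_mat (append_col C y)))"
  hence z: "z \<in> carrier_vec r" using C by auto
  have "(transpose_mat C *\<^sub>v z) $ j = (transpose_mat (append_col C y) *\<^sub>v z) $ j" if "j < n" for j
    using that C z by (auto simp: append_col_def scalar_prod_def col_def)
  hence "transpose_mat C *\<^sub>v z = 0\<^sub>v n" using zero C by (intro eq_vecI) auto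
  thus "z = 0\<^sub>v (dim_col (transpose_mat (append_col C y)))" using full z C
    unfolding full_column_rank_def by auto
qed

lemma full_row_rank_block_diag:
  assumes C: "C \<in> carrier_mat r n" and full: "full_column_rank (transpose_mat C)"
  shows "full_column_rank (transpose_mat (four_block_mat C (0\<^sub>m r 1) (0\<^sub>m 1 n) (1\<^sub>m 1)))"
  unfolding full_column_rank_def
proof (intro ballI impI)
  let ?D = "four_block_mat (transpose_mat C) (0\<^sub>m n 1) (0\<^sub>m 1 r) (1\<^sub>m 1)"
  have D: "transpose_mat (four_block_mat C (0\<^sub>m r 1) (0\<^sub>m 1 n) (1\<^sub>m 1)) = ?D"
    using transpose_four_block_mat[OF C zero_carrier_mat zero_carrier_mat one_carrier_mat] by simp
  fix z assume "z \<in> carrier_vec (dim_col (transpose_mat (four_block_mat C (0\<^sub>m r 1) (0\<^sub>m 1 n) (1\<^sub>m 1))))"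
    and zero: "transpose_mat (four_block_mat C (0\<^sub>m r 1) (0\<^sub>m 1 n) (1\<^sub>m 1)) *\<^sub>v z =
      0\<^sub>v (dim_row (transpose_mat (four_block_mat C (0\<^sub>m r 1) (0\<^sub>m 1 n) (1\<^sub>m 1))))"
  hence z: "z \<in> carrier_vec (r + 1)" using C by auto
  define z1 z2 where "z1 = vec_first z r" and "z2 = vec_last z 1"
  have split: "z = z1 @\<^sub>v z2" unfolding z1_def z2_def using z by simp
  have "?D *\<^sub>v (z1 @\<^sub>v z2) =
      (transpose_mat C *\<^sub>v z1 + 0\<^sub>m n 1 *\<^sub>v z2) @\<^sub>v (0\<^sub>m 1 r *\<^sub>v z1 + 1\<^sub>m 1 *\<^sub>v z2)"
    by (rule four_block_mat_mult_vec) (use C in \<open>auto simp: z1_def z2_def\<close>)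
  also have "\<dots> = (transpose_mat C *\<^sub>v z1) @\<^sub>v z2"
    using C by (simp add: z1_def z2_def zero_mult_mat_vec)
  finally have "(transpose_mat C *\<^sub>v z1) @\<^sub>v z2 = 0\<^sub>v (n + 1)"
    using zero C D unfolding split[symmetric] by simp
  also have "0\<^sub>v (n + 1) = 0\<^sub>v n @\<^sub>v (0\<^sub>v 1 :: real vec)" by (intro eq_vecI) auto
  finally have "(transpose_mat C *\<^sub>v z1) @\<^sub>v z2 = 0\<^sub>v n @\<^sub>v 0\<^sub>v 1" .
  moreover have "transpose_mat C *\<^sub>v z1 \<in> carrier_vec n" using C by (auto intro: carrier_vecI)
  ultimately have "transpose_mat C *\<^sub>v z1 = 0\<^sub>v n" "z2 = 0\<^sub>v 1"
    using append_vec_eq[OF _ zero_carrier_vec] by blast+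
  hence "z1 = 0\<^sub>v r" "z2 = 0\<^sub>v 1" using full C unfolding full_column_rank_def z1_def by auto
  thus "z = 0\<^sub>v (dim_col (transpose_mat (four_block_mat C (0\<^sub>m r 1) (0\<^sub>m 1 n) (1\<^sub>m 1))))"
    using split C by (auto intro!: eq_vecI)
qed

lemma full_rank_factorization:
  fixes A :: "real mat"
  assumes "A \<in> carrier_mat m n"
  shows "\<exists>r B C. B \<in> carrier_mat m r \<and> C \<in> carrier_mat r n \<and> A = B * C \<and>
    full_column_rank B \<and> full_column_rank (transpose_mat C)"
  using assms
proof (induction n arbitrary: A)
  case 0
  have "A = 0\<^sub>m m 0 * 0\<^sub>m 0 0" using 0 by (intro eq_matI) auto
  thus ?case by (intro exI[of _ 0] exI[of _ "0\<^sub>m m 0"] exI[of _ "0\<^sub>m 0 0"])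
      (auto simp: full_column_rank_def)
next
  case (Suc n)
  define A' where "A' = mat m n (\<lambda>ij. A $$ ij)"
  define a where "a = col A n"
  have A: "A = append_col A' a" unfolding A'_def a_def by (rule append_col_split[OF Suc.prems])
  have a: "a \<in> carrier_vec m" using Suc.prems unfolding a_def by auto
  obtain r B C where B: "B \<in> carrier_mat m r" and C: "C \<in> carrier_mat r n" and A': "A' = B * C"
    and full_B: "full_column_rank B" and full_C: "full_column_rank (transpose_mat C)"
    using Suc.IH[of A'] unfolding A'_def by auto
  (* The new column is absorbed into C if it lies in the range of B, and appended to B otherwise. *)
  show ?case
  proof (cases "\<exists>y \<in> carrier_vec r. a = B *\<^sub>v y")
    case True
    then obtain y where y: "y \<in> carrier_vec r" and "a = B *\<^sub>v y" by blast
    hence "A = B * append_col C y" unfolding A A' using mult_append_col[OF B C y] by simp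
    moreover have "append_col C y \<in> carrier_mat r (Suc n)" using C by simp
    ultimately show ?thesis using B full_B full_row_rank_append_col[OF C full_C] by blast
  next
    case False
    let ?D = "four_block_mat C (0\<^sub>m r 1) (0\<^sub>m 1 n) (1\<^sub>m 1)"
    have "A = append_col B a * ?D" unfolding A A' by (rule append_col_mult_block_diag[OF B C a, symmetric])
    moreover have "?D \<in> carrier_mat (Suc r) (Suc n)" using C by auto
    ultimately show ?thesis
      using B full_column_rank_append_col[OF B a full_B] False full_row_rank_block_diag[OF C full_C]
      by (intro exI[of _ "Suc r"] exI[of _ "append_col B a"] exI[of _ ?D]) auto
  qed
qed

section \<open>The Moore--Penrose inverse\<close>

lemma gram_mat_inverse:
  fixes B :: "real mat"
  assumes B: "B \<in> carrier_mat m r" and full: "full_column_rank B"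
  shows "\<exists>L. L \<in> carrier_mat r r \<and> L * (transpose_mat B * B) = 1\<^sub>m r \<and>
     (transpose_mat B * B) * L = 1\<^sub>m r \<and> transpose_mat L = L"
proof -
  define K where "K = transpose_mat B * B"
  have K: "K \<in> carrier_mat r r" unfolding K_def using B by auto
  have "det K \<noteq> 0"
  proof
    assume "det K = 0"
    then obtain v where v: "v \<in> carrier_vec r" and "v \<noteq> 0\<^sub>v r" and Kv: "K *\<^sub>v v = 0\<^sub>v r"
      using det_0_iff_vec_prod_zero[OF K] by blast
    have Bv: "B *\<^sub>v v \<in> carrier_vec m" using B v by auto
    have "(B *\<^sub>v v) \<bullet>c (B *\<^sub>v v) = (transpose_mat B *\<^sub>v (B *\<^sub>v v)) \<bullet> v"
      using transpose_vec_mult_scalar[OF B v Bv] by (simp add: scalar_prod_def conjugate_vec_def)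
    also have "\<dots> = (K *\<^sub>v v) \<bullet> v" unfolding K_def using B v by simp
    also have "\<dots> = 0" using Kv v by simp
    finally have "B *\<^sub>v v = 0\<^sub>v m" using conjugate_square_eq_0_vec[OF Bv] by blast
    with \<open>v \<noteq> 0\<^sub>v r\<close> show False using full v B unfolding full_column_rank_def by auto
  qed
  then obtain L where L: "L \<in> carrier_mat r r" and LK: "L * K = 1\<^sub>m r" and KL: "K * L = 1\<^sub>m r"
    using det_non_zero_imp_unit[OF K] unfolding Units_def ring_mat_def by auto
  have "transpose_mat K = K" unfolding K_def using B by (simp add: transpose_mult[of _ r m])
  hence "transpose_mat L * K = 1\<^sub>m r"
    using arg_cong[OF KL, of transpose_mat] transpose_mult[OF K L] by simp
  hence "transpose_mat L = L"
    using assoc_mult_mat[of "transpose_mat L" r r K r L] L K KL by simp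
  thus ?thesis using L LK KL unfolding K_def by blast
qed

lemma is_mp_inverse_mult:
  fixes B C Bl Cr :: "real mat"
  assumes B: "B \<in> carrier_mat m r" and C: "C \<in> carrier_mat r n"
    and Bl: "Bl \<in> carrier_mat r m" and BlB: "Bl * B = 1\<^sub>m r" and sym_B: "transpose_mat (B * Bl) = B * Bl"
    and Cr: "Cr \<in> carrier_mat n r" and CCr: "C * Cr = 1\<^sub>m r" and sym_C: "transpose_mat (Cr * C) = Cr * C"
  shows "is_mp_inverse (B * C) (Cr * Bl)"
proof -
  have AX: "B * C * (Cr * Bl) = B * Bl"
    using assoc_mult_mat[OF B C, of "Cr * Bl" m] assoc_mult_mat[OF C Cr Bl, symmetric] CCr B C Cr Bl
    by simp
  have XA: "Cr * Bl * (B * C) = Cr * C"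
    using assoc_mult_mat[OF Cr Bl, of "B * C" n] assoc_mult_mat[OF Bl B C, symmetric] BlB B C Cr Bl
    by simp
  have "B * C * (Cr * Bl) * (B * C) = B * C"
    unfolding AX using assoc_mult_mat[OF B Bl, of "B * C" n] assoc_mult_mat[OF Bl B C, symmetric] BlB B C
    by simp
  moreover have "Cr * Bl * (B * C) * (Cr * Bl) = Cr * Bl"
    unfolding XA using assoc_mult_mat[OF Cr C, of "Cr * Bl" m] assoc_mult_mat[OF C Cr Bl, symmetric] CCr Cr Bl
    by simp
  ultimately show ?thesis
    unfolding is_mp_inverse_def AX XA using sym_B sym_C B C Cr Bl by auto
qed

lemma mp_inverse_exists:
  fixes A :: "real mat"
  shows "\<exists>X. is_mp_inverse A X"
proof -
  have "A \<in> carrier_mat (dim_row A) (dim_col A)" by auto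
  then obtain r B C where B: "B \<in> carrier_mat (dim_row A) r" and C: "C \<in> carrier_mat r (dim_col A)"
    and A: "A = B * C" and full_B: "full_column_rank B" and full_C: "full_column_rank (transpose_mat C)"
    using full_rank_factorization by blast
  obtain L1 where L1: "L1 \<in> carrier_mat r r" and L1B: "L1 * (transpose_mat B * B) = 1\<^sub>m r"
    and sym_L1: "transpose_mat L1 = L1"
    using gram_mat_inverse[OF B full_B] by blast
  have Bt: "transpose_mat B \<in> carrier_mat r (dim_row A)" and Ct: "transpose_mat C \<in> carrier_mat (dim_col A) r"
    using B C by auto
  obtain L2 where L2: "L2 \<in> carrier_mat r r" and CL2: "C * transpose_mat C * L2 = 1\<^sub>m r"
    and sym_L2: "transpose_mat L2 = L2"
    using gram_mat_inverse[OF Ct full_C] by auto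
  have "is_mp_inverse (B * C) (transpose_mat C * L2 * (L1 * transpose_mat B))"
  proof (rule is_mp_inverse_mult[OF B C])
    show "L1 * transpose_mat B * B = 1\<^sub>m r"
      using assoc_mult_mat[OF L1 Bt B] L1B by simp
    have "transpose_mat (L1 * transpose_mat B) = B * L1"
      using transpose_mult[OF L1 Bt] sym_L1 by simp
    thus "transpose_mat (B * (L1 * transpose_mat B)) = B * (L1 * transpose_mat B)"
      using transpose_mult[OF B mult_carrier_mat[OF L1 Bt]] assoc_mult_mat[OF B L1 Bt] by simp
    show "C * (transpose_mat C * L2) = 1\<^sub>m r"
      using assoc_mult_mat[OF C Ct L2] CL2 by simp
    have "transpose_mat (transpose_mat C * L2) = L2 * C"
      using transpose_mult[OF Ct L2] sym_L2 by simp
    thus "transpose_mat (transpose_mat C * L2 * C) = transpose_mat C * L2 * C"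
      using transpose_mult[OF mult_carrier_mat[OF Ct L2] C] assoc_mult_mat[OF Ct L2 C] by simp
  qed (use B C L1 L2 in auto)
  thus ?thesis unfolding A by blast
qed

lemma projector_eq_of_penrose:
  fixes A X Y :: "real mat"
  assumes A: "A \<in> carrier_mat m n" and X: "X \<in> carrier_mat n m" and Y: "Y \<in> carrier_mat n m"
    and AXA: "A * X * A = A" and AYA: "A * Y * A = A"
    and sym_X: "transpose_mat (A * X) = A * X" and sym_Y: "transpose_mat (A * Y) = A * Y"
  shows "A * X = A * Y"
proof -
  have AX: "A * X \<in> carrier_mat m m" and AY: "A * Y \<in> carrier_mat m m" using A X Y by auto
  have "transpose_mat A = transpose_mat (A * Y * A)" using AYA by simp
  also have "\<dots> = transpose_mat A * (A * Y)"
    using transpose_mult[OF AY A] sym_Y by simp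
  finally have At: "transpose_mat A = transpose_mat A * (A * Y)" .
  have "A * X = transpose_mat X * transpose_mat A"
    using transpose_mult[OF A X] sym_X by simp
  also have "\<dots> = transpose_mat X * transpose_mat A * (A * Y)"
    using At assoc_mult_mat[of "transpose_mat X" m n "transpose_mat A" m "A * Y" m] A X AY by simp
  also have "\<dots> = A * X * (A * Y)"
    using transpose_mult[OF A X] sym_X by simp
  also have "\<dots> = A * Y"
    using assoc_mult_mat[OF AX A Y, symmetric] AXA by simp
  finally show ?thesis .
qed

lemma mp_inverse_unique:
  fixes A X Y :: "real mat"
  assumes X: "is_mp_inverse A X" and Y: "is_mp_inverse A Y"
  shows "X = Y"
proof -
  define m n where "m = dim_row A" and "n = dim_col A"
  have A: "A \<in> carrier_mat m n" unfolding m_def n_def by auto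
  note X' = X[unfolded is_mp_inverse_def, folded m_def n_def]
  note Y' = Y[unfolded is_mp_inverse_def, folded m_def n_def]
  have Xc: "X \<in> carrier_mat n m" and Yc: "Y \<in> carrier_mat n m" using X' Y' by auto
  have AX_AY: "A * X = A * Y" by (rule projector_eq_of_penrose[OF A]) (use X' Y' in auto)
  have transpose_AZA: "transpose_mat A * transpose_mat Z * transpose_mat A = transpose_mat A"
    and transpose_AZ: "transpose_mat (transpose_mat A * transpose_mat Z) = transpose_mat A * transpose_mat Z"
    if "is_mp_inverse A Z" for Z
  proof -
    note Z = that[unfolded is_mp_inverse_def, folded m_def n_def]
    hence Zc: "Z \<in> carrier_mat n m" by auto
    show "transpose_mat A * transpose_mat Z * transpose_mat A = transpose_mat A"
      using Z transpose_mult[OF mult_carrier_mat[OF A Zc] A] transpose_mult[OF A Zc]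
        assoc_mult_mat[of "transpose_mat A" n m "transpose_mat Z" n "transpose_mat A" m] A Zc by auto
    show "transpose_mat (transpose_mat A * transpose_mat Z) = transpose_mat A * transpose_mat Z"
      using Z transpose_mult[OF Zc A] by metis
  qed
  have "transpose_mat A * transpose_mat X = transpose_mat A * transpose_mat Y"
    by (rule projector_eq_of_penrose[of _ n m])
      (use A Xc Yc transpose_AZA[OF X] transpose_AZA[OF Y] transpose_AZ[OF X] transpose_AZ[OF Y] in auto)
  hence XA_YA: "X * A = Y * A" using transpose_mult[OF Xc A] transpose_mult[OF Yc A] X' Y' by metis
  have "X = X * (A * X)" using X' assoc_mult_mat[OF Xc A Xc] by simp
  also have "\<dots> = Y * A * Y" using AX_AY XA_YA assoc_mult_mat[OF Xc A Yc] assoc_mult_mat[OF Yc A Yc] by simp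
  also have "\<dots> = Y" using Y' by simp
  finally show ?thesis .
qed

lemma mp_inv_penrose:
  fixes A :: "real mat"
  assumes "A \<in> carrier_mat m n"
  shows "mp_inv A \<in> carrier_mat n m" "A * mp_inv A * A = A" "mp_inv A * A * mp_inv A = mp_inv A"
    "transpose_mat (A * mp_inv A) = A * mp_inv A" "transpose_mat (mp_inv A * A) = mp_inv A * A"
proof -
  have "is_mp_inverse A (mp_inv A)"
    unfolding mp_inv_def by (rule theI') (use mp_inverse_exists mp_inverse_unique in blast)
  thus "mp_inv A \<in> carrier_mat n m" "A * mp_inv A * A = A" "mp_inv A * A * mp_inv A = mp_inv A"
    "transpose_mat (A * mp_inv A) = A * mp_inv A" "transpose_mat (mp_inv A * A) = mp_inv A * A"
    using assms unfolding is_mp_inverse_def by auto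
qed

lemma mult_mp_inv_mult_of_null_subset:
  fixes A P :: "real mat"
  assumes A: "A \<in> carrier_mat m n" and P: "P \<in> carrier_mat m n" and null: "null_mat A \<subseteq> null_mat P"
  shows "P * (mp_inv A * A) = P"
proof (rule eq_matI_mult_vec)
  note H = mp_inv_penrose[OF A]
  fix x :: "real vec" assume x: "x \<in> carrier_vec n"
  have Hx: "mp_inv A * A *\<^sub>v x \<in> carrier_vec n" using H(1) A x by auto
  have "A *\<^sub>v (mp_inv A * A *\<^sub>v x) = A *\<^sub>v x"
    using H(1,2) A x assoc_mult_mat_vec[of A m n "mp_inv A * A" n x] assoc_mult_mat[OF A H(1) A] by auto
  hence "A *\<^sub>v (x - mp_inv A * A *\<^sub>v x) = 0\<^sub>v m"
    using A x Hx by (simp add: mult_minus_distrib_mat_vec)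
  moreover have "x - mp_inv A * A *\<^sub>v x \<in> carrier_vec n" using x Hx by simp
  ultimately have "P *\<^sub>v (x - mp_inv A * A *\<^sub>v x) = 0\<^sub>v m"
    using null A P unfolding null_mat_def by auto
  hence "P *\<^sub>v x = P *\<^sub>v (mp_inv A * A *\<^sub>v x)"
    using P x Hx eq_of_minus_eq_zero_vec[of "P *\<^sub>v x" m] by (simp add: mult_minus_distrib_mat_vec)
  thus "P * (mp_inv A * A) *\<^sub>v x = P *\<^sub>v x"
    using assoc_mult_mat_vec[of P m n "mp_inv A * A" n x] P A H(1) x by auto
qed (use A P mp_inv_penrose(1)[OF A] in auto)

lemma mult_mp_inv_mult_of_range_subset:
  fixes A P :: "real mat"
  assumes A: "A \<in> carrier_mat m n" and P: "P \<in> carrier_mat m n" and range: "range_mat P \<subseteq> range_mat A"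
  shows "A * mp_inv A * P = P"
proof (rule eq_matI_mult_vec)
  note H = mp_inv_penrose[OF A]
  fix x :: "real vec" assume x: "x \<in> carrier_vec n"
  obtain y where y: "y \<in> carrier_vec n" and Px: "P *\<^sub>v x = A *\<^sub>v y"
    using range x P A unfolding range_mat_def by auto
  have "A * mp_inv A * P *\<^sub>v x = A * mp_inv A * A *\<^sub>v y"
    using assoc_mult_mat_vec[of "A * mp_inv A" m m P n x] assoc_mult_mat_vec[of "A * mp_inv A" m m A n y]
      Px A P H(1) x y by auto
  thus "A * mp_inv A * P *\<^sub>v x = P *\<^sub>v x" using H(2) Px by simp
qed (use A P mp_inv_penrose(1)[OF A] in auto)

lemma mp_inv_mult_eq_of_null_eq:
  fixes A P :: "real mat"
  assumes A: "A \<in> carrier_mat m n" and P: "P \<in> carrier_mat m n" and null: "null_mat A = null_mat P"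
  shows "mp_inv P * P = mp_inv A * A"
proof -
  note HA = mp_inv_penrose[OF A] and HP = mp_inv_penrose[OF P]
  have "mp_inv A * A * (mp_inv P * P) = mp_inv A * A"
    using mult_mp_inv_mult_of_null_subset[OF P A] null assoc_mult_mat[OF HA(1) A, of "mp_inv P * P" n] HP(1) P
    by auto
  moreover have "mp_inv P * P * (mp_inv A * A) = mp_inv P * P"
    using mult_mp_inv_mult_of_null_subset[OF A P] null assoc_mult_mat[OF HP(1) P, of "mp_inv A * A" n] HA(1) A
    by auto
  ultimately show ?thesis
    using transpose_mult[of "mp_inv P * P" n n "mp_inv A * A" n] HA HP A P by (metis mult_carrier_mat)
qed

lemma mult_mp_inv_eq_of_range_eq:
  fixes A P :: "real mat"
  assumes A: "A \<in> carrier_mat m n" and P: "P \<in> carrier_mat m n" and range: "range_mat A = range_mat P"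
  shows "P * mp_inv P = A * mp_inv A"
proof -
  note HA = mp_inv_penrose[OF A] and HP = mp_inv_penrose[OF P]
  have "A * mp_inv A * (P * mp_inv P) = P * mp_inv P"
    using mult_mp_inv_mult_of_range_subset[OF A P] range assoc_mult_mat[of "A * mp_inv A" m m P n "mp_inv P" m]
      HA(1) HP(1) A P by auto
  moreover have "P * mp_inv P * (A * mp_inv A) = A * mp_inv A"
    using mult_mp_inv_mult_of_range_subset[OF P A] range assoc_mult_mat[of "P * mp_inv P" m m A n "mp_inv A" m]
      HA(1) HP(1) A P by auto
  ultimately show ?thesis
    using transpose_mult[of "P * mp_inv P" m m "A * mp_inv A" m] HA HP A P by (metis mult_carrier_mat)
qed

lemma mp_inv_mult_mult_mp_inv_of_range_eq:
  fixes A P :: "real mat"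
  assumes A: "A \<in> carrier_mat m n" and P: "P \<in> carrier_mat m n" and range: "range_mat A = range_mat P"
  shows "mp_inv P * (A * mp_inv A) = mp_inv P"
  using mult_mp_inv_eq_of_range_eq[OF A P range] mp_inv_penrose[OF P]
    assoc_mult_mat[of "mp_inv P" n m P n "mp_inv P" m] P by auto

section \<open>Nonnegative matrices and the spectral radius\<close>

lemma nonneg_mat_mult_vec_mono:
  fixes M :: "real mat"
  assumes M: "M \<in> carrier_mat m n" and nonneg: "nonneg_mat M" and le: "u \<le> v" and v: "v \<in> carrier_vec n"
  shows "M *\<^sub>v u \<le> M *\<^sub>v v"
proof -
  have u: "u \<in> carrier_vec n" using le v unfolding less_eq_vec_def by (auto intro: carrier_vecI)
  have "(M *\<^sub>v u) $ i \<le> (M *\<^sub>v v) $ i" if "i < m" for i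
    unfolding index_mult_mat_vec_sum[OF M u that] index_mult_mat_vec_sum[OF M v that]
    using nonneg le M v that by (intro sum_mono mult_left_mono) (auto simp: nonneg_mat_def less_eq_vec_def)
  thus ?thesis using M unfolding less_eq_vec_def by auto
qed

lemma nonneg_mat_mult_vec_nonneg:
  fixes M :: "real mat"
  assumes M: "M \<in> carrier_mat m n" and "nonneg_mat M" "0\<^sub>v n \<le> v" "v \<in> carrier_vec n"
  shows "0\<^sub>v m \<le> M *\<^sub>v v"
proof -
  have "M *\<^sub>v 0\<^sub>v n = 0\<^sub>v m" using M by auto
  thus ?thesis using nonneg_mat_mult_vec_mono[OF assms] by simp
qed

lemma mult_mat_vec_mono_left:
  fixes M N :: "real mat"
  assumes le: "M \<le> N" and N: "N \<in> carrier_mat m n" and u: "u \<in> carrier_vec n" and u_nonneg: "0\<^sub>v n \<le> u"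
  shows "M *\<^sub>v u \<le> N *\<^sub>v u"
proof -
  have M: "M \<in> carrier_mat m n" using le N unfolding less_eq_mat_def by auto
  have "(M *\<^sub>v u) $ i \<le> (N *\<^sub>v u) $ i" if "i < m" for i
    unfolding index_mult_mat_vec_sum[OF M u that] index_mult_mat_vec_sum[OF N u that]
    using le u_nonneg M N u that by (intro sum_mono mult_right_mono) (auto simp: less_eq_mat_def less_eq_vec_def)
  thus ?thesis using M N unfolding less_eq_vec_def by auto
qed

lemma le_add_of_quadratic_bound:
  fixes x a b :: "real vec"
  assumes r: "1 \<le> r" and x: "x \<in> carrier_vec n" "0\<^sub>v n \<le> x" and a: "a \<in> carrier_vec n"
    and b: "b \<in> carrier_vec n" "0\<^sub>v n \<le> b" and le: "r\<^sup>2 \<cdot>\<^sub>v x \<le> r \<cdot>\<^sub>v a + b"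
  shows "x \<le> a + b"
proof -
  have "x $ i \<le> a $ i + b $ i" if i: "i < n" for i
  proof -
    have "0 \<le> b $ i" "0 \<le> x $ i" using b x i unfolding less_eq_vec_def by auto
    have "r * (r * x $ i) \<le> r * a $ i + b $ i"
      using le x a b i unfolding less_eq_vec_def by (simp add: power2_eq_square mult.assoc)
    also have "\<dots> \<le> r * (a $ i + b $ i)"
      using mult_right_mono[OF r \<open>0 \<le> b $ i\<close>] by (simp add: distrib_left)
    finally have "r * x $ i \<le> a $ i + b $ i" by (rule mult_left_le_imp_le) (use r in auto)
    moreover have "x $ i \<le> r * x $ i" using mult_right_mono[OF r \<open>0 \<le> x $ i\<close>] by simp
    ultimately show ?thesis by linarith
  qed
  thus ?thesis using x a b unfolding less_eq_vec_def by auto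
qed

lemma nonneg_mat_mult:
  fixes A B :: "real mat"
  assumes "A \<in> carrier_mat m k" "B \<in> carrier_mat k n" "nonneg_mat A" "nonneg_mat B"
  shows "nonneg_mat (A * B)"
  unfolding nonneg_mat_def
proof (intro allI impI)
  fix i j assume "i < dim_row (A * B)" "j < dim_col (A * B)"
  thus "0 \<le> (A * B) $$ (i, j)"
    using assms index_mult_mat_sum[OF assms(1,2), of i j] unfolding nonneg_mat_def
    by (auto intro!: sum_nonneg)
qed

lemma nonneg_mat_power:
  fixes N :: "real mat"
  assumes N: "N \<in> carrier_mat n n" and nonneg: "nonneg_mat N"
  shows "nonneg_mat (N ^\<^sub>m t)"
proof (induction t)
  case 0 thus ?case by (auto simp: nonneg_mat_def)
next
  case (Suc t) thus ?case using nonneg_mat_mult[OF pow_carrier_mat[OF N] N] nonneg by simp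
qed

lemma nonneg_mat_transpose [simp]: "nonneg_mat (transpose_mat M) = nonneg_mat M"
  unfolding nonneg_mat_def by auto

lemma nonneg_mat_four_block_mat:
  assumes "A \<in> carrier_mat n1 m1" "B \<in> carrier_mat n1 m2" "C \<in> carrier_mat n2 m1" "D \<in> carrier_mat n2 m2"
    and "nonneg_mat A" "nonneg_mat B" "nonneg_mat C" "nonneg_mat D"
  shows "nonneg_mat (four_block_mat A B C D)"
  using assms unfolding nonneg_mat_def by auto

lemma norm_mult_mat_vec_le:
  fixes T :: "real mat" and v :: "complex vec"
  assumes T: "T \<in> carrier_mat m n" and nonneg: "nonneg_mat T" and v: "v \<in> carrier_vec n"
  shows "map_vec cmod (map_mat complex_of_real T *\<^sub>v v) \<le> T *\<^sub>v map_vec cmod v"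
proof -
  have "cmod ((map_mat complex_of_real T *\<^sub>v v) $ i) \<le> (T *\<^sub>v map_vec cmod v) $ i" if i: "i < m" for i
  proof -
    have "cmod ((map_mat complex_of_real T *\<^sub>v v) $ i) = cmod (\<Sum>j<n. complex_of_real (T $$ (i, j)) * v $ j)"
      using index_mult_mat_vec_sum[of _ m n v i] T v i by auto
    also have "\<dots> \<le> (\<Sum>j<n. cmod (complex_of_real (T $$ (i, j)) * v $ j))" by (rule norm_sum)
    also have "\<dots> = (T *\<^sub>v map_vec cmod v) $ i"
      using index_mult_mat_vec_sum[OF T _ i, of "map_vec cmod v"] nonneg T v i
      by (auto simp: norm_mult nonneg_mat_def intro!: sum.cong)
    finally show ?thesis .
  qed
  thus ?thesis using T v unfolding less_eq_vec_def by auto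
qed

lemma real_spectral_radius_eigenvalue:
  assumes "N \<in> carrier_mat k k" "0 < k"
  obtains \<mu> where "eigenvalue (map_mat complex_of_real N) \<mu>" "real_spectral_radius N = cmod \<mu>"
  using spectral_radius_mem_max(1)[of "map_mat complex_of_real N" k] assms
  unfolding real_spectral_radius_def spectrum_def by auto

lemma real_spectral_radius_nonneg:
  assumes "N \<in> carrier_mat k k" "0 < k"
  shows "0 \<le> real_spectral_radius N"
  using spectral_radius_mem_max(1)[of "map_mat complex_of_real N" k] assms
  unfolding real_spectral_radius_def by auto

lemma real_spectral_radius_smult_le:
  assumes N: "N \<in> carrier_mat k k" and k: "0 < k" and c: "0 < c"
  shows "real_spectral_radius (c \<cdot>\<^sub>m N) \<le> c * real_spectral_radius N"
proof -
  let ?M = "map_mat complex_of_real N" and ?cM = "map_mat complex_of_real (c \<cdot>\<^sub>m N)"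
  have M: "?M \<in> carrier_mat k k" and cM: "?cM \<in> carrier_mat k k" using N by auto
  obtain l v where \<rho>: "real_spectral_radius (c \<cdot>\<^sub>m N) = cmod l" and v: "v \<in> carrier_vec k"
    and "v \<noteq> 0\<^sub>v k" and eig: "?cM *\<^sub>v v = l \<cdot>\<^sub>v v"
    using spectral_radius_mem_max(1)[OF cM k] cM
    unfolding real_spectral_radius_def spectrum_def eigenvalue_def eigenvector_def by auto
  have "(?M *\<^sub>v v) $ i = (l / c) * v $ i" if i: "i < k" for i
  proof -
    have "complex_of_real c * (?M *\<^sub>v v) $ i = (?cM *\<^sub>v v) $ i"
      using index_mult_mat_vec_sum[OF M v i] index_mult_mat_vec_sum[OF cM v i] N i
      by (simp add: sum_distrib_left mult.assoc)
    thus ?thesis using eig c v i by (simp add: field_simps)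
  qed
  hence "eigenvector ?M v (l / c)"
    unfolding eigenvector_def using M v \<open>v \<noteq> 0\<^sub>v k\<close> by auto
  hence "cmod (l / c) \<le> real_spectral_radius N"
    using spectral_radius_mem_max(2)[OF M k] unfolding real_spectral_radius_def spectrum_def eigenvalue_def
    by blast
  thus ?thesis using \<rho> c by (simp add: norm_divide field_simps)
qed

lemma nonneg_mat_supervector_power:
  fixes N :: "real mat"
  assumes N: "N \<in> carrier_mat k k" and nonneg: "nonneg_mat N" and z: "z \<in> carrier_vec k"
    and \<kappa>: "0 \<le> \<kappa>" and super: "\<kappa> \<cdot>\<^sub>v z \<le> N *\<^sub>v z"
  shows "\<kappa> ^ t \<cdot>\<^sub>v z \<le> N ^\<^sub>m t *\<^sub>v z"
proof (induction t)
  case 0 thus ?case using z N by simp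
next
  case (Suc t)
  have Nt: "N ^\<^sub>m t \<in> carrier_mat k k" using N by simp
  have "\<kappa> ^ Suc t \<cdot>\<^sub>v z \<le> \<kappa> \<cdot>\<^sub>v (N ^\<^sub>m t *\<^sub>v z)"
    using Suc.IH \<kappa> z unfolding less_eq_vec_def by (auto simp: mult.assoc intro: mult_left_mono)
  also have "\<dots> = N ^\<^sub>m t *\<^sub>v (\<kappa> \<cdot>\<^sub>v z)" using mult_mat_vec[OF Nt z] by simp
  also have "\<dots> \<le> N ^\<^sub>m t *\<^sub>v (N *\<^sub>v z)"
    by (rule nonneg_mat_mult_vec_mono[OF Nt nonneg_mat_power[OF N nonneg] super]) (use N z in auto)
  also have "\<dots> = N ^\<^sub>m Suc t *\<^sub>v z" using assoc_mult_mat_vec[OF Nt N z] by simp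
  finally show ?case .
qed

lemma collatz_wielandt_lower_bound:
  fixes N :: "real mat"
  assumes N: "N \<in> carrier_mat k k" and nonneg: "nonneg_mat N" and z: "z \<in> carrier_vec k"
    and z_nonneg: "0\<^sub>v k \<le> z" and z_nonzero: "z \<noteq> 0\<^sub>v k" and super: "\<beta> \<cdot>\<^sub>v z \<le> N *\<^sub>v z"
  shows "\<beta> \<le> real_spectral_radius N"
proof (rule ccontr)
  (* For \<rho>(N) < \<gamma> < \<beta> the powers of N / \<gamma> stay bounded, but by the supervector
     inequality they grow like (\<beta> / \<gamma>)\<^sup>t in the direction of z. *)
  obtain i0 where i0: "i0 < k" and z_i0: "0 < z $ i0"
    using z_nonneg z_nonzero z unfolding less_eq_vec_def by (metis eq_vecI index_zero_vec order_less_le carrier_vecD)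
  define \<rho> where "\<rho> = real_spectral_radius N"
  assume "\<not> \<beta> \<le> real_spectral_radius N"
  moreover have "0 \<le> \<rho>" unfolding \<rho>_def using real_spectral_radius_nonneg[OF N] i0 by simp
  ultimately obtain \<gamma> where "\<rho> < \<gamma>" "\<gamma> < \<beta>" and \<gamma>: "0 < \<gamma>"
    unfolding \<rho>_def by (metis dense le_less_trans not_le)
  define N' where "N' = (1 / \<gamma>) \<cdot>\<^sub>m N"
  have N': "N' \<in> carrier_mat k k" and nonneg': "nonneg_mat N'"
    using N nonneg \<gamma> unfolding N'_def nonneg_mat_def by auto
  have "real_spectral_radius N' \<le> \<rho> / \<gamma>"
    using real_spectral_radius_smult_le[OF N _, of "1 / \<gamma>"] i0 \<gamma> unfolding N'_def \<rho>_def by simp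
  also have "\<dots> < 1" using \<open>\<rho> < \<gamma>\<close> \<gamma> by simp
  finally obtain c where "norm_bound (map_mat complex_of_real N' ^\<^sub>m t) c" for t
    using spectral_radius_jnf_norm_bound_less_1_upper_triangular[of _ k] N'
    unfolding real_spectral_radius_def by fastforce
  hence bound: "(N' ^\<^sub>m t) $$ (i0, j) \<le> c" if "j < k" for t j
    using of_real_hom.mat_hom_pow[OF N', of t] i0 that N' unfolding norm_bound_def
    by (metis (no_types, lifting) abs_le_D1 carrier_matD index_map_mat norm_of_real pow_carrier_mat)
  define \<kappa> where "\<kappa> = \<beta> / \<gamma>"
  have \<kappa>: "1 < \<kappa>" unfolding \<kappa>_def using \<open>\<gamma> < \<beta>\<close> \<gamma> by simp
  have "\<kappa> \<cdot>\<^sub>v z \<le> N' *\<^sub>v z"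
    using super \<gamma> smult_mat_mult_vec[OF N z] unfolding N'_def \<kappa>_def less_eq_vec_def
    by (auto simp: field_simps divide_right_mono)
  hence "\<kappa> ^ t * z $ i0 \<le> (N' ^\<^sub>m t *\<^sub>v z) $ i0" for t
    using nonneg_mat_supervector_power[OF N' nonneg' z, of \<kappa> t] \<kappa> i0 z unfolding less_eq_vec_def by auto
  also have "(N' ^\<^sub>m t *\<^sub>v z) $ i0 \<le> c * sum (($) z) {..<k}" for t
    unfolding index_mult_mat_vec_sum[OF pow_carrier_mat[OF N'] z i0] sum_distrib_left
    using bound z_nonneg z by (intro sum_mono mult_right_mono) (auto simp: less_eq_vec_def)
  finally have "\<kappa> ^ t \<le> c * sum (($) z) {..<k} / z $ i0" for t
    using z_i0 by (simp add: field_simps)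
  thus False using real_arch_pow[OF \<kappa>] not_le by blast
qed

section \<open>The block iteration matrix\<close>

lemma eigenvector_append_vec:
  fixes A :: "complex mat"
  assumes "A \<in> carrier_mat (n + n) (n + n)" and "eigenvalue A \<mu>"
  obtains v w where "v \<in> carrier_vec n" "w \<in> carrier_vec n" "v @\<^sub>v w \<noteq> 0\<^sub>v (n + n)"
    "A *\<^sub>v (v @\<^sub>v w) = (\<mu> \<cdot>\<^sub>v v) @\<^sub>v (\<mu> \<cdot>\<^sub>v w)"
proof -
  obtain x where x: "x \<in> carrier_vec (n + n)" "x \<noteq> 0\<^sub>v (n + n)" "A *\<^sub>v x = \<mu> \<cdot>\<^sub>v x"
    using assms unfolding eigenvalue_def eigenvector_def by auto
  have split: "vec_first x n @\<^sub>v vec_last x n = x" using x by simp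
  show ?thesis
  proof (rule that[of "vec_first x n" "vec_last x n"])
    show "A *\<^sub>v (vec_first x n @\<^sub>v vec_last x n) = (\<mu> \<cdot>\<^sub>v vec_first x n) @\<^sub>v (\<mu> \<cdot>\<^sub>v vec_last x n)"
      unfolding split smult_append_vec[OF vec_first_carrier, symmetric] split using x by simp
  qed (use x split in auto)
qed

lemma quadratic_eigenvector_of_block_eigenvalue:
  fixes T U :: "real mat"
  assumes T: "T \<in> carrier_mat n n" and U: "U \<in> carrier_mat n n"
    and eig: "eigenvalue (map_mat complex_of_real (four_block_mat T U (1\<^sub>m n) (0\<^sub>m n n))) \<mu>"
  obtains v where "v \<in> carrier_vec n" "v \<noteq> 0\<^sub>v n"
    "(\<mu> * \<mu>) \<cdot>\<^sub>v v = \<mu> \<cdot>\<^sub>v (map_mat complex_of_real T *\<^sub>v v) + map_mat complex_of_real U *\<^sub>v v"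
proof -
  let ?T = "map_mat complex_of_real T" and ?U = "map_mat complex_of_real U"
  have T': "?T \<in> carrier_mat n n" and U': "?U \<in> carrier_mat n n" using T U by auto
  have W: "map_mat complex_of_real (four_block_mat T U (1\<^sub>m n) (0\<^sub>m n n)) = four_block_mat ?T ?U (1\<^sub>m n) (0\<^sub>m n n)"
    using T U by (subst map_four_block_mat) (auto simp: of_real_hom.mat_hom_one)
  obtain v w where v: "v \<in> carrier_vec n" and w: "w \<in> carrier_vec n" and nz: "v @\<^sub>v w \<noteq> 0\<^sub>v (n + n)"
    and "four_block_mat ?T ?U (1\<^sub>m n) (0\<^sub>m n n) *\<^sub>v (v @\<^sub>v w) = (\<mu> \<cdot>\<^sub>v v) @\<^sub>v (\<mu> \<cdot>\<^sub>v w)"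
    using eigenvector_append_vec[OF _ eig, of n] T U unfolding W by auto
  moreover have "four_block_mat ?T ?U (1\<^sub>m n) (0\<^sub>m n n) *\<^sub>v (v @\<^sub>v w) = (?T *\<^sub>v v + ?U *\<^sub>v w) @\<^sub>v v"
    using four_block_mat_mult_vec[OF T' U' one_carrier_mat zero_carrier_mat v w] v w
    by (simp add: zero_mult_mat_vec)
  moreover have "?T *\<^sub>v v + ?U *\<^sub>v w \<in> carrier_vec n" "\<mu> \<cdot>\<^sub>v v \<in> carrier_vec n" using T' U' v w by auto
  ultimately have top: "?T *\<^sub>v v + ?U *\<^sub>v w = \<mu> \<cdot>\<^sub>v v" and bot: "v = \<mu> \<cdot>\<^sub>v w"
    using append_vec_eq by metis+
  have "w \<noteq> 0\<^sub>v n" using nz bot w by auto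
  moreover have "(\<mu> * \<mu>) \<cdot>\<^sub>v w = \<mu> \<cdot>\<^sub>v (?T *\<^sub>v w) + ?U *\<^sub>v w"
    using top unfolding bot by (simp add: mult_mat_vec[OF T' w] smult_smult_assoc)
  ultimately show ?thesis using that w by blast
qed

lemma quadratic_left_eigenvector_of_block_eigenvalue:
  fixes T U :: "real mat"
  assumes T: "T \<in> carrier_mat n n" and U: "U \<in> carrier_mat n n"
    and eig: "eigenvalue (map_mat complex_of_real (four_block_mat T U (1\<^sub>m n) (0\<^sub>m n n))) \<mu>"
  obtains v where "v \<in> carrier_vec n" "v \<noteq> 0\<^sub>v n"
    "(\<mu> * \<mu>) \<cdot>\<^sub>v v = \<mu> \<cdot>\<^sub>v (map_mat complex_of_real (transpose_mat T) *\<^sub>v v)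
       + map_mat complex_of_real (transpose_mat U) *\<^sub>v v"
proof -
  let ?T = "map_mat complex_of_real (transpose_mat T)" and ?U = "map_mat complex_of_real (transpose_mat U)"
  let ?W = "map_mat complex_of_real (four_block_mat T U (1\<^sub>m n) (0\<^sub>m n n))"
  have T': "?T \<in> carrier_mat n n" and U': "?U \<in> carrier_mat n n" using T U by auto
  have W: "?W \<in> carrier_mat (n + n) (n + n)" using T U by auto
  have Wt: "transpose_mat ?W = four_block_mat ?T (1\<^sub>m n) ?U (0\<^sub>m n n)"
    using T U by (subst map_four_block_mat transpose_four_block_mat; auto simp: of_real_hom.mat_hom_one)+
  have "eigenvalue (transpose_mat ?W) \<mu>"
    using eig W by (simp add: eigenvalue_root_char_poly)
  then obtain v w where v: "v \<in> carrier_vec n" and w: "w \<in> carrier_vec n" and nz: "v @\<^sub>v w \<noteq> 0\<^sub>v (n + n)"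
    and "transpose_mat ?W *\<^sub>v (v @\<^sub>v w) = (\<mu> \<cdot>\<^sub>v v) @\<^sub>v (\<mu> \<cdot>\<^sub>v w)"
    using eigenvector_append_vec[of "transpose_mat ?W" n] W by auto
  moreover have "transpose_mat ?W *\<^sub>v (v @\<^sub>v w) = (?T *\<^sub>v v + w) @\<^sub>v (?U *\<^sub>v v)"
    unfolding Wt using four_block_mat_mult_vec[OF T' one_carrier_mat U' zero_carrier_mat v w] v w U'
    by (simp add: zero_mult_mat_vec)
  moreover have "?T *\<^sub>v v + w \<in> carrier_vec n" "\<mu> \<cdot>\<^sub>v v \<in> carrier_vec n" using T' v w by auto
  ultimately have top: "?T *\<^sub>v v + w = \<mu> \<cdot>\<^sub>v v" and bot: "?U *\<^sub>v v = \<mu> \<cdot>\<^sub>v w"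
    using append_vec_eq by metis+
  have "v \<noteq> 0\<^sub>v n"
  proof
    assume "v = 0\<^sub>v n"
    moreover have "?T *\<^sub>v 0\<^sub>v n = 0\<^sub>v n" "\<mu> \<cdot>\<^sub>v 0\<^sub>v n = 0\<^sub>v n" using T' by auto
    ultimately have "w = 0\<^sub>v n" using top w by simp
    with \<open>v = 0\<^sub>v n\<close> show False using nz by auto
  qed
  moreover have "(\<mu> * \<mu>) \<cdot>\<^sub>v v = \<mu> \<cdot>\<^sub>v (?T *\<^sub>v v) + ?U *\<^sub>v v"
  proof -
    have "(\<mu> * \<mu>) \<cdot>\<^sub>v v = \<mu> \<cdot>\<^sub>v (?T *\<^sub>v v + w)" using top by (simp add: smult_smult_assoc)
    also have "\<dots> = \<mu> \<cdot>\<^sub>v (?T *\<^sub>v v) + \<mu> \<cdot>\<^sub>v w" by (rule smult_add_distrib_vec) (use T' v w in auto)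
    finally show ?thesis using bot by simp
  qed
  ultimately show ?thesis using that v by blast
qed

lemma map_vec_cmod_nonneg_nonzero:
  assumes "v \<in> carrier_vec n" "v \<noteq> 0\<^sub>v n"
  shows "0\<^sub>v n \<le> map_vec cmod v" "map_vec cmod v \<noteq> 0\<^sub>v n"
proof -
  show "0\<^sub>v n \<le> map_vec cmod v" using assms unfolding less_eq_vec_def by auto
  show "map_vec cmod v \<noteq> 0\<^sub>v n"
  proof
    assume "map_vec cmod v = 0\<^sub>v n"
    hence "v $ i = 0" if "i < n" for i using that assms(1) by (metis index_map_vec(1) index_zero_vec(1) norm_eq_zero carrier_vecD)
    thus False using assms by (auto intro!: eq_vecI)
  qed
qed

lemma norm_quadratic_eigenvector:
  fixes T U :: "real mat" and v :: "complex vec"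
  assumes T: "T \<in> carrier_mat n n" "nonneg_mat T" and U: "U \<in> carrier_mat n n" "nonneg_mat U"
    and v: "v \<in> carrier_vec n"
    and eq: "(\<mu> * \<mu>) \<cdot>\<^sub>v v = \<mu> \<cdot>\<^sub>v (map_mat complex_of_real T *\<^sub>v v) + map_mat complex_of_real U *\<^sub>v v"
  shows "(cmod \<mu>)\<^sup>2 \<cdot>\<^sub>v map_vec cmod v \<le> cmod \<mu> \<cdot>\<^sub>v (T *\<^sub>v map_vec cmod v) + U *\<^sub>v map_vec cmod v"
proof -
  let ?Tv = "map_mat complex_of_real T *\<^sub>v v" and ?Uv = "map_mat complex_of_real U *\<^sub>v v"
  have "(cmod \<mu>)\<^sup>2 * cmod (v $ i) \<le> cmod \<mu> * (T *\<^sub>v map_vec cmod v) $ i + (U *\<^sub>v map_vec cmod v) $ i"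
    if i: "i < n" for i
  proof -
    have "(cmod \<mu>)\<^sup>2 * cmod (v $ i) = cmod (\<mu> * ?Tv $ i + ?Uv $ i)"
      using arg_cong[OF eq, of "\<lambda>x. cmod (x $ i)"] T U v i by (simp add: norm_mult power2_eq_square)
    also have "\<dots> \<le> cmod \<mu> * cmod (?Tv $ i) + cmod (?Uv $ i)"
      using norm_triangle_ineq[of "\<mu> * ?Tv $ i"] by (simp add: norm_mult)
    also have "\<dots> \<le> cmod \<mu> * (T *\<^sub>v map_vec cmod v) $ i + (U *\<^sub>v map_vec cmod v) $ i"
      using norm_mult_mat_vec_le[OF T v] norm_mult_mat_vec_le[OF U v] T U i
      unfolding less_eq_vec_def by (intro add_mono mult_left_mono) auto
    finally show ?thesis .
  qed
  thus ?thesis using T U v unfolding less_eq_vec_def by auto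
qed

lemma real_spectral_radius_four_block_ge:
  fixes T U :: "real mat"
  assumes T: "T \<in> carrier_mat n n" "nonneg_mat T" and U: "U \<in> carrier_mat n n" "nonneg_mat U"
    and u: "u \<in> carrier_vec n" "0\<^sub>v n \<le> u" "u \<noteq> 0\<^sub>v n" and \<rho>: "0 \<le> \<rho>"
    and super: "\<rho>\<^sup>2 \<cdot>\<^sub>v u \<le> \<rho> \<cdot>\<^sub>v (T *\<^sub>v u) + U *\<^sub>v u"
  shows "\<rho> \<le> real_spectral_radius (four_block_mat T U (1\<^sub>m n) (0\<^sub>m n n))"
proof -
  let ?W = "four_block_mat T U (1\<^sub>m n) (0\<^sub>m n n)"
  define z where "z = (\<rho> \<cdot>\<^sub>v u) @\<^sub>v u"
  have z: "z \<in> carrier_vec (n + n)" "0\<^sub>v (n + n) \<le> z" "z \<noteq> 0\<^sub>v (n + n)"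
  proof -
    have zero: "0\<^sub>v (n + n) = 0\<^sub>v n @\<^sub>v (0\<^sub>v n :: real vec)" by auto
    have "0\<^sub>v n \<le> \<rho> \<cdot>\<^sub>v u" using u \<rho> unfolding less_eq_vec_def by auto
    moreover have "\<rho> \<cdot>\<^sub>v u \<in> carrier_vec n" using u by simp
    ultimately show "0\<^sub>v (n + n) \<le> z" unfolding zero z_def using append_vec_le[OF zero_carrier_vec] u by blast
    show "z \<noteq> 0\<^sub>v (n + n)" unfolding zero z_def using append_vec_eq[of "\<rho> \<cdot>\<^sub>v u" n] u by auto
  qed (use u in \<open>auto simp: z_def\<close>)
  have "\<rho> \<cdot>\<^sub>v z = (\<rho>\<^sup>2 \<cdot>\<^sub>v u) @\<^sub>v (\<rho> \<cdot>\<^sub>v u)"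
    unfolding z_def using smult_append_vec[of "\<rho> \<cdot>\<^sub>v u" n \<rho> u] u by (simp add: power2_eq_square smult_smult_assoc)
  also have "\<dots> \<le> (\<rho> \<cdot>\<^sub>v (T *\<^sub>v u) + U *\<^sub>v u) @\<^sub>v (\<rho> \<cdot>\<^sub>v u)"
    using append_vec_le[of "\<rho>\<^sup>2 \<cdot>\<^sub>v u" n] super T U u by auto
  also have "\<dots> = ?W *\<^sub>v z"
    unfolding z_def using four_block_mat_mult_vec[OF T(1) U(1) one_carrier_mat zero_carrier_mat, of "\<rho> \<cdot>\<^sub>v u" u] u T
    by (simp add: mult_mat_vec zero_mult_mat_vec)
  finally have "\<rho> \<cdot>\<^sub>v z \<le> ?W *\<^sub>v z" .
  moreover have "nonneg_mat ?W"
    by (rule nonneg_mat_four_block_mat) (use T U in \<open>auto simp: nonneg_mat_def\<close>)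
  ultimately show ?thesis using collatz_wielandt_lower_bound[of ?W "n + n", OF _ _ z] \<rho> T U by auto
qed

section \<open>Weak regular proper double splittings\<close>

lemma proper_double_splittingD:
  assumes "A \<in> carrier_mat m n" and "proper_double_splitting A P R S"
  shows "P \<in> carrier_mat m n" "R \<in> carrier_mat m n" "S \<in> carrier_mat m n" "A = P - R + S"
    "range_mat A = range_mat P" "null_mat A = null_mat P"
  using assms unfolding proper_double_splitting_def by auto

lemma weak_regular_pdsD:
  assumes "weak_regular_pds A P R S"
  shows "proper_double_splitting A P R S" "nonneg_mat (mp_inv P)"
    "nonneg_mat (mp_inv P * R)" "nonneg_mat (- (mp_inv P * S))"
  using assms unfolding weak_regular_pds_def by auto

lemma mp_inv_mult_splitting:
  fixes A P R S :: "real mat"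
  assumes A: "A \<in> carrier_mat m n" and split: "proper_double_splitting A P R S"
  shows "mp_inv P * A = mp_inv A * A - mp_inv P * (R - S)"
proof -
  note d = proper_double_splittingD[OF A split]
  have G: "mp_inv P \<in> carrier_mat n m" using mp_inv_penrose(1)[OF d(1)] .
  have "A = P - (R - S)" using d(1-4) by (intro eq_matI) auto
  hence "mp_inv P * A = mp_inv P * P - mp_inv P * (R - S)"
    using mult_minus_distrib_mat[OF G d(1), of "R - S"] d(2,3) by (metis minus_carrier_mat)
  thus ?thesis using mp_inv_mult_eq_of_null_eq[OF A d(1,6)] by simp
qed

lemma proper_splitting_subinvariant_eq_zero:
  fixes A P R S :: "real mat"
  assumes A: "A \<in> carrier_mat m n" and H_nonneg: "nonneg_mat (mp_inv A)"
    and split: "proper_double_splitting A P R S" and G_nonneg: "nonneg_mat (mp_inv P)"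
    and x: "x \<in> carrier_vec n" and x_nonneg: "0\<^sub>v n \<le> x"
    and sub: "x \<le> transpose_mat (mp_inv P * (R - S)) *\<^sub>v x"
  shows "x = 0\<^sub>v n"
proof -
  note d = proper_double_splittingD[OF A split]
  define G H M where "G = mp_inv P" and "H = mp_inv A" and "M = mp_inv P * (R - S)"
  have G: "G \<in> carrier_mat n m" and H: "H \<in> carrier_mat n m" and RS: "R - S \<in> carrier_mat m n"
    using mp_inv_penrose(1)[OF d(1)] mp_inv_penrose(1)[OF A] d(2,3) unfolding G_def H_def by auto
  have M: "M \<in> carrier_mat n n" and HA: "H * A \<in> carrier_mat n n" using G H A RS unfolding M_def G_def by auto
  define y where "y = transpose_mat G *\<^sub>v x"
  have y: "y \<in> carrier_vec m" "0\<^sub>v m \<le> y"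
    using nonneg_mat_mult_vec_nonneg[of "transpose_mat G" m n x] x_nonneg x G G_nonneg
    unfolding y_def G_def by auto
  have "transpose_mat A *\<^sub>v y = transpose_mat (H * A) *\<^sub>v x - transpose_mat M *\<^sub>v x"
    using transpose_mult_mat_vec[OF G A x] mp_inv_mult_splitting[OF A split] transpose_minus[OF HA M] HA M x
    unfolding y_def G_def H_def M_def by (simp add: minus_mult_distrib_mat_vec)
  hence "transpose_mat A *\<^sub>v y \<le> transpose_mat (H * A) *\<^sub>v x - x"
    using sub HA M x unfolding M_def less_eq_vec_def by auto
  hence "transpose_mat H *\<^sub>v (transpose_mat A *\<^sub>v y) \<le> transpose_mat H *\<^sub>v (transpose_mat (H * A) *\<^sub>v x - x)"
    using nonneg_mat_mult_vec_mono[of "transpose_mat H" m n] H H_nonneg HA x unfolding H_def by auto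
  also have "\<dots> = transpose_mat (H * A * H) *\<^sub>v x - transpose_mat H *\<^sub>v x"
    using transpose_mult_mat_vec[OF HA H x] H HA x by (simp add: mult_minus_distrib_mat_vec)
  also have "\<dots> = 0\<^sub>v m" using mp_inv_penrose(3)[OF A] H x unfolding H_def by simp
  also have "transpose_mat H *\<^sub>v (transpose_mat A *\<^sub>v y) = transpose_mat (G * (A * H)) *\<^sub>v x"
    using transpose_mult_mat_vec[OF A H y(1)] transpose_mult_mat_vec[OF G _ x, of "A * H" m] A H
    unfolding y_def by simp
  finally have "y \<le> 0\<^sub>v m"
    using mp_inv_mult_mult_mp_inv_of_range_eq[OF A d(1,5)] unfolding y_def G_def H_def by simp
  hence "y = 0\<^sub>v m" using y by auto
  have "transpose_mat M *\<^sub>v x = transpose_mat (R - S) *\<^sub>v y"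
    unfolding M_def y_def G_def using transpose_mult_mat_vec[OF _ RS x, of "mp_inv P"]
      mp_inv_penrose(1)[OF d(1)] by simp
  also have "\<dots> = 0\<^sub>v n"
    unfolding \<open>y = 0\<^sub>v m\<close> by (rule eq_vecI) (use RS in \<open>auto simp: scalar_prod_def\<close>)
  finally have "x \<le> 0\<^sub>v n" using sub unfolding M_def by simp
  thus ?thesis using x_nonneg by auto
qed

lemma weak_regular_iter_spectral_radius_lt_1:
  fixes A P R S :: "real mat"
  assumes n: "0 < n" and A: "A \<in> carrier_mat m n" and H_nonneg: "nonneg_mat (mp_inv A)"
    and split: "weak_regular_pds A P R S"
  shows "real_spectral_radius (iter_mat n P R S) < 1"
proof (rule ccontr)
  note w = weak_regular_pdsD[OF split] and d = proper_double_splittingD[OF A w(1)]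
  define T U where "T = mp_inv P * R" and "U = - (mp_inv P * S)"
  have G: "mp_inv P \<in> carrier_mat n m" using mp_inv_penrose(1)[OF d(1)] .
  have T: "T \<in> carrier_mat n n" and U: "U \<in> carrier_mat n n" unfolding T_def U_def using G d(2,3) by auto
  have W: "iter_mat n P R S = four_block_mat T U (1\<^sub>m n) (0\<^sub>m n n)" unfolding iter_mat_def T_def U_def ..
  obtain \<mu> where eig: "eigenvalue (map_mat complex_of_real (four_block_mat T U (1\<^sub>m n) (0\<^sub>m n n))) \<mu>"
    and \<rho>: "real_spectral_radius (iter_mat n P R S) = cmod \<mu>"
    using real_spectral_radius_eigenvalue[of "four_block_mat T U (1\<^sub>m n) (0\<^sub>m n n)" "n + n"] T U n
    unfolding W by auto
  assume "\<not> real_spectral_radius (iter_mat n P R S) < 1"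
  hence \<mu>: "1 \<le> cmod \<mu>" using \<rho> by simp
  obtain v where v: "v \<in> carrier_vec n" "v \<noteq> 0\<^sub>v n" and quad:
    "(\<mu> * \<mu>) \<cdot>\<^sub>v v = \<mu> \<cdot>\<^sub>v (map_mat complex_of_real (transpose_mat T) *\<^sub>v v)
       + map_mat complex_of_real (transpose_mat U) *\<^sub>v v"
    using quadratic_left_eigenvector_of_block_eigenvalue[OF T U eig] by blast
  define x where "x = map_vec cmod v"
  have x: "x \<in> carrier_vec n" "0\<^sub>v n \<le> x" "x \<noteq> 0\<^sub>v n"
    unfolding x_def using v map_vec_cmod_nonneg_nonzero[OF v] by auto
  have Tt: "transpose_mat T \<in> carrier_mat n n" "nonneg_mat (transpose_mat T)"
    and Ut: "transpose_mat U \<in> carrier_mat n n" "nonneg_mat (transpose_mat U)"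
    using T U w(3,4) unfolding T_def U_def by auto
  have "(cmod \<mu>)\<^sup>2 \<cdot>\<^sub>v x \<le> cmod \<mu> \<cdot>\<^sub>v (transpose_mat T *\<^sub>v x) + transpose_mat U *\<^sub>v x"
    unfolding x_def by (rule norm_quadratic_eigenvector[OF Tt Ut v(1) quad])
  hence "x \<le> transpose_mat T *\<^sub>v x + transpose_mat U *\<^sub>v x"
    using le_add_of_quadratic_bound[OF \<mu> x(1,2)] nonneg_mat_mult_vec_nonneg[OF Ut x(2,1)] Tt Ut x by auto
  also have "\<dots> = transpose_mat (mp_inv P * (R - S)) *\<^sub>v x"
  proof -
    have "T + U = mp_inv P * (R - S)"
      unfolding T_def U_def using mult_minus_distrib_mat[OF G d(2,3)] G d(2,3) by (intro eq_matI) auto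
    thus ?thesis using transpose_add[OF T U] add_mult_distrib_mat_vec[OF Tt(1) Ut(1) x(1)] by simp
  qed
  finally have "x = 0\<^sub>v n" using proper_splitting_subinvariant_eq_zero[OF A H_nonneg w(1,2) x(1,2)] by simp
  with x(3) show False ..
qed

lemma scaled_difference_le:
  fixes r t1 s1 t2 s2 :: real
  assumes le: "t1 - s1 \<le> t2 - s2" and "t2 \<le> t1 \<or> s2 \<le> s1" and r: "0 \<le> r" "r \<le> 1"
  shows "r * t1 - s1 \<le> r * t2 - s2"
  using assms(2)
proof
  assume "t2 \<le> t1"
  hence "(1 - r) * t2 \<le> (1 - r) * t1" using r by (intro mult_left_mono) auto
  thus ?thesis using le by (simp add: algebra_simps)
next
  assume "s2 \<le> s1"
  hence "(1 - r) * s2 \<le> (1 - r) * s1" using r by (intro mult_left_mono) auto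
  moreover have "r * (t1 - s1) \<le> r * (t2 - s2)" using le r by (intro mult_left_mono) auto
  ultimately show ?thesis by (simp add: algebra_simps)
qed

lemma proper_splitting_comparison:
  fixes A P1 R1 S1 P2 R2 S2 :: "real mat"
  assumes A: "A \<in> carrier_mat m n"
    and split1: "proper_double_splitting A P1 R1 S1" and split2: "proper_double_splitting A P2 R2 S2"
    and ge_A: "ge_mat (mp_inv P1 * A) (mp_inv P2 * A)"
    and ge_RS: "ge_mat (mp_inv P1 * R1) (mp_inv P2 * R2) \<or> ge_mat (mp_inv P1 * S1) (mp_inv P2 * S2)"
    and r: "0 \<le> r" "r \<le> 1"
  shows "r \<cdot>\<^sub>m (mp_inv P1 * R1) + - (mp_inv P1 * S1) \<le> r \<cdot>\<^sub>m (mp_inv P2 * R2) + - (mp_inv P2 * S2)"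
proof -
  note d1 = proper_double_splittingD[OF A split1] and d2 = proper_double_splittingD[OF A split2]
  have G1: "mp_inv P1 \<in> carrier_mat n m" and G2: "mp_inv P2 \<in> carrier_mat n m"
    using mp_inv_penrose(1)[OF d1(1)] mp_inv_penrose(1)[OF d2(1)] .
  have "r * (mp_inv P1 * R1) $$ (i, j) - (mp_inv P1 * S1) $$ (i, j)
      \<le> r * (mp_inv P2 * R2) $$ (i, j) - (mp_inv P2 * S2) $$ (i, j)" if ij: "i < n" "j < n" for i j
  proof -
    define t1 s1 t2 s2 where "t1 = (mp_inv P1 * R1) $$ (i, j)" and "s1 = (mp_inv P1 * S1) $$ (i, j)"
      and "t2 = (mp_inv P2 * R2) $$ (i, j)" and "s2 = (mp_inv P2 * S2) $$ (i, j)"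
    have diff: "(mp_inv P * (R - S)) $$ (i, j) = (mp_inv P * R) $$ (i, j) - (mp_inv P * S) $$ (i, j)"
      if "mp_inv P \<in> carrier_mat n m" "R \<in> carrier_mat m n" "S \<in> carrier_mat m n" for P R S
      using mult_minus_distrib_mat[OF that] that ij by simp
    have "(mp_inv P2 * A) $$ (i, j) \<le> (mp_inv P1 * A) $$ (i, j)"
      using ge_A G1 G2 A ij unfolding ge_mat_def nonneg_mat_def by auto
    hence "t1 - s1 \<le> t2 - s2"
      unfolding mp_inv_mult_splitting[OF A split1] mp_inv_mult_splitting[OF A split2]
      using diff[OF G1 d1(2,3)] diff[OF G2 d2(2,3)] G1 G2 A d1(2,3) d2(2,3) ij
      by (simp add: t1_def s1_def t2_def s2_def)
    moreover from ge_RS have "t2 \<le> t1 \<or> s2 \<le> s1"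
      using G1 G2 d1(2,3) d2(2,3) ij unfolding ge_mat_def nonneg_mat_def t1_def t2_def s1_def s2_def
      by auto
    ultimately have "r * t1 - s1 \<le> r * t2 - s2" using scaled_difference_le r by blast
    thus ?thesis unfolding t1_def s1_def t2_def s2_def .
  qed
  thus ?thesis using G1 G2 d1(2,3) d2(2,3) unfolding less_eq_mat_def by auto
qed

lemma weak_regular_iter_spectral_radius_le:
  fixes A P1 R1 S1 P2 R2 S2 :: "real mat"
  assumes n: "0 < n" and A: "A \<in> carrier_mat m n"
    and split1: "weak_regular_pds A P1 R1 S1" and split2: "weak_regular_pds A P2 R2 S2"
    and ge_A: "ge_mat (mp_inv P1 * A) (mp_inv P2 * A)"
    and ge_RS: "ge_mat (mp_inv P1 * R1) (mp_inv P2 * R2) \<or> ge_mat (mp_inv P1 * S1) (mp_inv P2 * S2)"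
    and conv: "real_spectral_radius (iter_mat n P1 R1 S1) \<le> 1"
  shows "real_spectral_radius (iter_mat n P1 R1 S1) \<le> real_spectral_radius (iter_mat n P2 R2 S2)"
proof -
  note w1 = weak_regular_pdsD[OF split1] and w2 = weak_regular_pdsD[OF split2]
  note d1 = proper_double_splittingD[OF A w1(1)] and d2 = proper_double_splittingD[OF A w2(1)]
  define T1 U1 T2 U2 where "T1 = mp_inv P1 * R1" and "U1 = - (mp_inv P1 * S1)"
    and "T2 = mp_inv P2 * R2" and "U2 = - (mp_inv P2 * S2)"
  have T1: "T1 \<in> carrier_mat n n" and U1: "U1 \<in> carrier_mat n n"
    and T2: "T2 \<in> carrier_mat n n" and U2: "U2 \<in> carrier_mat n n"
    using mp_inv_penrose(1)[OF d1(1)] mp_inv_penrose(1)[OF d2(1)] d1(2,3) d2(2,3)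
    unfolding T1_def U1_def T2_def U2_def by auto
  have W1: "iter_mat n P1 R1 S1 = four_block_mat T1 U1 (1\<^sub>m n) (0\<^sub>m n n)"
    and W2: "iter_mat n P2 R2 S2 = four_block_mat T2 U2 (1\<^sub>m n) (0\<^sub>m n n)"
    unfolding iter_mat_def T1_def U1_def T2_def U2_def by simp_all
  obtain \<mu> where eig: "eigenvalue (map_mat complex_of_real (four_block_mat T1 U1 (1\<^sub>m n) (0\<^sub>m n n))) \<mu>"
    and \<rho>: "real_spectral_radius (iter_mat n P1 R1 S1) = cmod \<mu>"
    using real_spectral_radius_eigenvalue[of "four_block_mat T1 U1 (1\<^sub>m n) (0\<^sub>m n n)" "n + n"] T1 U1 n
    unfolding W1 by auto
  obtain v where v: "v \<in> carrier_vec n" "v \<noteq> 0\<^sub>v n" and quad: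
    "(\<mu> * \<mu>) \<cdot>\<^sub>v v = \<mu> \<cdot>\<^sub>v (map_mat complex_of_real T1 *\<^sub>v v) + map_mat complex_of_real U1 *\<^sub>v v"
    using quadratic_eigenvector_of_block_eigenvalue[OF T1 U1 eig] by blast
  define u where "u = map_vec cmod v"
  have u: "u \<in> carrier_vec n" "0\<^sub>v n \<le> u" "u \<noteq> 0\<^sub>v n"
    unfolding u_def using v map_vec_cmod_nonneg_nonzero[OF v] by auto
  have "(cmod \<mu>)\<^sup>2 \<cdot>\<^sub>v u \<le> cmod \<mu> \<cdot>\<^sub>v (T1 *\<^sub>v u) + U1 *\<^sub>v u"
    unfolding u_def using norm_quadratic_eigenvector[OF _ _ _ _ v(1) quad] T1 U1 w1(3,4)
    unfolding T1_def U1_def by blast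
  also have "\<dots> = (cmod \<mu> \<cdot>\<^sub>m T1 + U1) *\<^sub>v u" using smult_add_mult_mat_vec[OF T1 U1 u(1)] ..
  also have "\<dots> \<le> (cmod \<mu> \<cdot>\<^sub>m T2 + U2) *\<^sub>v u"
    using proper_splitting_comparison[OF A w1(1) w2(1) ge_A ge_RS, of "cmod \<mu>"] conv \<rho> T2 U2 u
    unfolding T1_def U1_def T2_def U2_def by (intro mult_mat_vec_mono_left[where m = n]) auto
  also have "\<dots> = cmod \<mu> \<cdot>\<^sub>v (T2 *\<^sub>v u) + U2 *\<^sub>v u" using smult_add_mult_mat_vec[OF T2 U2 u(1)] .
  finally show ?thesis
    using real_spectral_radius_four_block_ge[OF T2 _ U2 _ u] w2(3,4) \<rho>
    unfolding W2 T2_def U2_def by simp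
qed

theorem theorem3p8:
  fixes A P1 R1 S1 P2 R2 S2 :: "real mat" and m n :: nat
  assumes "n \<ge> 1"
    and "A \<in> carrier_mat m n"
    and "nonneg_mat (mp_inv A)"
    and "weak_regular_pds A P1 R1 S1"
    and "weak_regular_pds A P2 R2 S2"
    and "ge_mat (mp_inv P1 * A) (mp_inv P2 * A)"
    and "ge_mat (mp_inv P1 * R1) (mp_inv P2 * R2) \<or> ge_mat (mp_inv P1 * S1) (mp_inv P2 * S2)"
  shows "real_spectral_radius (iter_mat n P1 R1 S1) \<le> real_spectral_radius (iter_mat n P2 R2 S2)
       \<and> real_spectral_radius (iter_mat n P2 R2 S2) < 1"
proof -
  have n: "0 < n" using assms(1) by simp
  have conv1: "real_spectral_radius (iter_mat n P1 R1 S1) < 1"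
    and conv2: "real_spectral_radius (iter_mat n P2 R2 S2) < 1"
    using weak_regular_iter_spectral_radius_lt_1[OF n assms(2,3)] assms(4,5) by blast+
  have "real_spectral_radius (iter_mat n P1 R1 S1) \<le> real_spectral_radius (iter_mat n P2 R2 S2)"
    using weak_regular_iter_spectral_radius_le[OF n assms(2,4-7)] conv1 by simp
  with conv2 show ?thesis by simp
qed

end
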